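(* Let $X$ be a nonempty CFG-space over a Boolean ring $B$ and $f:X\to B$ a contractive map, where $B$ carries the metric $d(a,b)=a+b$. Then there exists $u\in X$ such that $f(x)\le f(u)$ for all $x\in X$.
   Context: $B$ is a Boolean ring ($a\vee b=a+b+ab$, $a\le b\iff ab=a$; $a_1\oplus\cdots\oplus a_n$ denotes a sum of pairwise disjoint elements). A Boolean metric space over $B$: set $X$ with $d:X\times X\to B$, $d(x,y)=0\iff x=y$, symmetric, $d(x,z)\le d(x,y)\vee d(y,z)$. For $x_1,\dots,x_n\in X$, $a_i\in B$ with $a_1\oplus\cdots\oplus a_n=1$, $x$ is a convex combination of the $x_i$ with coefficients $a_i$ if $a_id(x,x_i)=0$ for all $i$. A CFG-space is a space in which all such combinations exist and every element is a convex combination of elements of some fixed finite subset. A map $f$ is contractive if $d(f(x),f(y))\le d(x,y)$. *)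

theory Defs
  imports Main
begin

text \<open>We model B as a type of class comm_ring_1 with the idempotency law as hypothesis
  (commutativity follows from idempotency anyway).\<close>

definition boolean_ring :: "'b::comm_ring_1 itself \<Rightarrow> bool" where
  "boolean_ring _ \<longleftrightarrow> (\<forall>a::'b. a * a = a)"

definition bjoin :: "'b::comm_ring_1 \<Rightarrow> 'b \<Rightarrow> 'b" where
  "bjoin a b = a + b + a * b"

definition ble :: "'b::comm_ring_1 \<Rightarrow> 'b \<Rightarrow> bool" where
  "ble a b \<longleftrightarrow> a * b = a"

definition boolean_metric :: "'a set \<Rightarrow> ('a \<Rightarrow> 'a \<Rightarrow> 'b::comm_ring_1) \<Rightarrow> bool" where
  "boolean_metric X d \<longleftrightarrow>
     (\<forall>x\<in>X. \<forall>y\<in>X. d x y = 0 \<longleftrightarrow> x = y) \<and>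
     (\<forall>x\<in>X. \<forall>y\<in>X. d x y = d y x) \<and>
     (\<forall>x\<in>X. \<forall>y\<in>X. \<forall>z\<in>X. ble (d x z) (bjoin (d x y) (d y z)))"

definition partition_of_unity :: "nat \<Rightarrow> (nat \<Rightarrow> 'b::comm_ring_1) \<Rightarrow> bool" where
  "partition_of_unity n a \<longleftrightarrow>
     (\<forall>i<n. \<forall>j<n. i \<noteq> j \<longrightarrow> a i * a j = 0) \<and> (\<Sum>i<n. a i) = 1"

definition convex_comb ::
  "('a \<Rightarrow> 'a \<Rightarrow> 'b::comm_ring_1) \<Rightarrow> 'a \<Rightarrow> nat \<Rightarrow> (nat \<Rightarrow> 'a) \<Rightarrow> (nat \<Rightarrow> 'b) \<Rightarrow> bool" where
  "convex_comb d x n xs a \<longleftrightarrow> (\<forall>i<n. a i * d x (xs i) = 0)"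

definition CFG_space :: "'a set \<Rightarrow> ('a \<Rightarrow> 'a \<Rightarrow> 'b::comm_ring_1) \<Rightarrow> bool" where
  "CFG_space X d \<longleftrightarrow> boolean_metric X d \<and>
     (\<forall>n xs a. (\<forall>i<n. xs i \<in> X) \<and> partition_of_unity n a \<longrightarrow>
        (\<exists>x\<in>X. convex_comb d x n xs a)) \<and>
     (\<exists>S. finite S \<and> S \<subseteq> X \<and>
        (\<forall>x\<in>X. \<exists>n xs a. (\<forall>i<n. xs i \<in> S) \<and> partition_of_unity n a \<and> convex_comb d x n xs a))"

definition contractive_to_B :: "'a set \<Rightarrow> ('a \<Rightarrow> 'a \<Rightarrow> 'b::comm_ring_1) \<Rightarrow> ('a \<Rightarrow> 'b) \<Rightarrow> bool" where
  "contractive_to_B X d f \<longleftrightarrow> (\<forall>x\<in>X. \<forall>y\<in>X. ble (f x + f y) (d x y))"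

end

theory Submission
  imports Defs
begin

(* A contractive map f : X \<rightarrow> B is "affine" on convex combinations:
   if x is a convex combination of x_1..x_n with coefficients a_1 \<oplus> ... \<oplus> a_n = 1,
   then a_i d(x,x_i) = 0 forces a_i f(x) = a_i f(x_i), hence f(x) = \<Sum> a_i f(x_i).
   Two consequences drive the proof:
   (1) an upper bound of all f(x_i) bounds f(x), since the sum is a disjoint one;
   (2) the join f(u) \<or> f(v) is attained: with c = f(v)(1 - f(u)) the convex
       combination w of u, v with coefficients 1 - c, c has f(w) = f(u) \<or> f(v).
   By (2) and induction, the values of f on the finite generating set S of the
   CFG-space have an upper bound f(u) with u \<in> X; by (1) every f(x), x \<in> X,
   lies below f(u), because x is a convex combination of points of S. *)

lemma boolean_ring_idem:
  fixes a :: "'b::comm_ring_1"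
  assumes "boolean_ring TYPE('b)"
  shows "a * a = a"
  using assms by (simp add: boolean_ring_def)

lemma boolean_ring_add_self:
  fixes a :: "'b::comm_ring_1"
  assumes B: "boolean_ring TYPE('b)"
  shows "a + a = 0"
proof -
  have "(a + a) * (a + a) = (a * a + a * a) + (a * a + a * a)"
    by (simp add: algebra_simps)
  then have "(a + a) + (a + a) = a + a"
    using boolean_ring_idem[OF B, of a] boolean_ring_idem[OF B, of "a + a"] by simp
  then show ?thesis by simp
qed

lemma boolean_ring_minus:
  fixes a :: "'b::comm_ring_1"
  assumes "boolean_ring TYPE('b)"
  shows "- a = a"
  using boolean_ring_add_self[OF assms, of a] by (simp add: add_eq_0_iff)

lemma ble_trans:
  fixes a b c :: "'b::comm_ring_1"
  assumes "ble a b" and "ble b c"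
  shows "ble a c"
  using assms unfolding ble_def by (metis mult.assoc)

lemma ble_bjoin:
  fixes a b :: "'b::comm_ring_1"
  assumes B: "boolean_ring TYPE('b)"
  shows "ble a (bjoin a b)" and "ble b (bjoin a b)"
proof -
  have aa: "a * a = a" and bb: "b * b = b" using boolean_ring_idem[OF B] by auto
  have ab: "a * b + a * b = 0" using boolean_ring_add_self[OF B] .
  have "a * bjoin a b = a * a + a * b + a * (a * b)"
    by (simp add: bjoin_def algebra_simps)
  also have "\<dots> = a + (a * b + a * b)" using aa by (simp add: mult.assoc[symmetric])
  finally show "ble a (bjoin a b)" using ab by (simp add: ble_def)
  have "b * bjoin a b = a * b + b * b + a * (b * b)"
    by (simp add: bjoin_def algebra_simps)
  also have "\<dots> = b + (a * b + a * b)" using bb by (simp add: algebra_simps)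
  finally show "ble b (bjoin a b)" using ab by (simp add: ble_def)
qed

lemma ble_scaled_sum:
  fixes a g :: "nat \<Rightarrow> 'b::comm_ring_1"
  assumes "\<forall>i<n. ble (g i) b"
  shows "ble (\<Sum>i<n. a i * g i) b"
proof -
  have "(\<Sum>i<n. a i * g i) * b = (\<Sum>i<n. a i * (g i * b))"
    by (simp add: sum_distrib_right mult.assoc)
  also have "\<dots> = (\<Sum>i<n. a i * g i)"
    using assms by (intro sum.cong) (auto simp: ble_def)
  finally show ?thesis by (simp add: ble_def)
qed

lemma partition_of_unity_two:
  fixes c :: "'b::comm_ring_1"
  assumes cc: "c * c = c"
  shows "partition_of_unity 2 (\<lambda>i. if i = 0 then 1 - c else c)"
  unfolding partition_of_unity_def
proof (intro conjI allI impI)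
  fix i j :: nat assume "i < 2" "j < 2" "i \<noteq> j"
  then show "(if i = 0 then 1 - c else c) * (if j = 0 then 1 - c else c) = 0"
    using cc by (auto simp: algebra_simps)
qed (simp add: numeral_2_eq_2)

lemma contractive_agree:
  fixes d :: "'a \<Rightarrow> 'a \<Rightarrow> 'b::comm_ring_1"
  assumes B: "boolean_ring TYPE('b)" and con: "contractive_to_B X d f"
    and "x \<in> X" "y \<in> X" and a: "a * d x y = 0"
  shows "a * f x = a * f y"
proof -
  have "(f x + f y) * d x y = f x + f y"
    using con \<open>x \<in> X\<close> \<open>y \<in> X\<close> by (simp add: contractive_to_B_def ble_def)
  then have "a * (f x + f y) = (f x + f y) * (a * d x y)"
    by (metis mult.commute mult.left_commute)
  then have "a * f x = - (a * f y)"
    using a by (simp add: algebra_simps eq_neg_iff_add_eq_0)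
  then show ?thesis using boolean_ring_minus[OF B] by simp
qed

lemma contractive_convex_comb:
  fixes d :: "'a \<Rightarrow> 'a \<Rightarrow> 'b::comm_ring_1"
  assumes B: "boolean_ring TYPE('b)" and con: "contractive_to_B X d f"
    and x: "x \<in> X" and xs: "\<forall>i<n. xs i \<in> X"
    and pu: "partition_of_unity n a" and cv: "convex_comb d x n xs a"
  shows "f x = (\<Sum>i<n. a i * f (xs i))"
proof -
  have "f x = (\<Sum>i<n. a i) * f x"
    using pu by (simp add: partition_of_unity_def)
  also have "\<dots> = (\<Sum>i<n. a i * f x)"
    by (simp add: sum_distrib_right)
  also have "\<dots> = (\<Sum>i<n. a i * f (xs i))"
    using cv xs by (intro sum.cong refl contractive_agree[OF B con x])
      (auto simp: convex_comb_def)
  finally show ?thesis .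
qed

lemma CFG_join_attained:
  fixes d :: "'a \<Rightarrow> 'a \<Rightarrow> 'b::comm_ring_1"
  assumes B: "boolean_ring TYPE('b)" and cfg: "CFG_space X d"
    and con: "contractive_to_B X d f" and "u \<in> X" "v \<in> X"
  shows "\<exists>w\<in>X. f w = bjoin (f u) (f v)"
proof -
  define c where "c = f v * (1 - f u)"
  define xs where "xs = (\<lambda>i::nat. if i = 0 then u else v)"
  define a where "a = (\<lambda>i::nat. if i = 0 then 1 - c else c)"
  have pu: "partition_of_unity 2 a"
    unfolding a_def by (rule partition_of_unity_two[OF boolean_ring_idem[OF B]])
  have xs_X: "\<forall>i<2. xs i \<in> X" using \<open>u \<in> X\<close> \<open>v \<in> X\<close> by (simp add: xs_def)
  then obtain w where w: "w \<in> X" and cv: "convex_comb d w 2 xs a"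
    using cfg pu unfolding CFG_space_def by blast
  have "f w = (\<Sum>i<2. a i * f (xs i))"
    by (rule contractive_convex_comb[OF B con w xs_X pu cv])
  also have "\<dots> = (1 - c) * f u + c * f v"
    by (simp add: numeral_2_eq_2 a_def xs_def)
  also have "\<dots> = bjoin (f u) (f v)"
  proof -
    have uu: "f u * f u = f u" and vv: "f v * f v = f v"
      using boolean_ring_idem[OF B] by auto
    have "(1 - c) * f u + c * f v = f u + f v - f u * f v - f u * f v * (f v - f u)"
      by (simp add: c_def algebra_simps vv)
    also have "\<dots> = f u + f v - f u * f v"
      by (simp add: algebra_simps mult.assoc[symmetric] uu vv)
    also have "\<dots> = bjoin (f u) (f v)"
      by (simp add: bjoin_def boolean_ring_minus[OF B])
    finally show ?thesis .
  qed
  finally show ?thesis using w by blast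
qed

lemma CFG_finite_upper_bound:
  fixes d :: "'a \<Rightarrow> 'a \<Rightarrow> 'b::comm_ring_1"
  assumes B: "boolean_ring TYPE('b)" and cfg: "CFG_space X d"
    and con: "contractive_to_B X d f" and "X \<noteq> {}"
    and "finite T" and "T \<subseteq> X"
  shows "\<exists>u\<in>X. \<forall>s\<in>T. ble (f s) (f u)"
  using \<open>finite T\<close> \<open>T \<subseteq> X\<close>
proof (induction T rule: finite_induct)
  case empty
  then show ?case using \<open>X \<noteq> {}\<close> by blast
next
  case (insert t T)
  then obtain u where u: "u \<in> X" "\<forall>s\<in>T. ble (f s) (f u)" by blast
  obtain w where w: "w \<in> X" "f w = bjoin (f u) (f t)"
    using CFG_join_attained[OF B cfg con u(1)] insert.prems by blast
  have "\<forall>s\<in>T. ble (f s) (f w)"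
    using u(2) ble_bjoin(1)[OF B] w(2) by (metis ble_trans)
  moreover have "ble (f t) (f w)" using ble_bjoin(2)[OF B] w(2) by simp
  ultimately show ?case using w(1) by blast
qed

theorem mainTheorem19:
  fixes X :: "'a set" and d :: "'a \<Rightarrow> 'a \<Rightarrow> 'b::comm_ring_1" and f :: "'a \<Rightarrow> 'b"
  assumes "boolean_ring TYPE('b)"
    and "X \<noteq> {}"
    and "CFG_space X d"
    and "contractive_to_B X d f"
  shows "\<exists>u\<in>X. \<forall>x\<in>X. ble (f x) (f u)"
proof -
  obtain S where S: "finite S" "S \<subseteq> X"
    and gen: "\<forall>x\<in>X. \<exists>n xs a. (\<forall>i<n. xs i \<in> S) \<and> partition_of_unity n a
                               \<and> convex_comb d x n xs a"
    using assms(3) unfolding CFG_space_def by blast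
  obtain u where u: "u \<in> X" "\<forall>s\<in>S. ble (f s) (f u)"
    using CFG_finite_upper_bound[OF assms(1,3,4,2) S] by blast
  have "ble (f x) (f u)" if x: "x \<in> X" for x
  proof -
    obtain n xs a where xs: "\<forall>i<n. xs i \<in> S" and pu: "partition_of_unity n a"
      and cv: "convex_comb d x n xs a" using gen x by blast
    have "f x = (\<Sum>i<n. a i * f (xs i))"
      using contractive_convex_comb[OF assms(1,4) x _ pu cv] xs S(2) by blast
    moreover have "ble (\<Sum>i<n. a i * f (xs i)) (f u)"
      using xs u(2) by (intro ble_scaled_sum) blast
    ultimately show ?thesis by simp
  qed
  then show ?thesis using u(1) by blast
qed

end
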